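(* Let $(X,p)$ be a complete partial metric space and $(Y,s)$ a strong partial metric space, and let $f,g:X\to Y$ be sequentially continuous. Suppose $g$ is consistent and there are real numbers $r$, $A\ge0$ and $0<c<1$ such that for every $x\in X$ there exists $z\in X$ with $$s(f(z),g(z))-s(f(z),f(z))\le c[s(f(x),g(x))-s(f(x),f(x))]$$ and $$r\le p(z,z)\le p(x,z)\le r+A[s(f(x),g(x))-s(f(x),f(x))]$$ (i.e. $f$ and $g$ are $f$-mutually $c_r$-contractive). Then $f$ and $g$ have a coincidence point, i.e. there is $a\in X$ with $f(a)=g(a)$.
   Context: A partial metric on $X$ is $p:X\times X\to\mathbb{R}$ with, for all $x,y,z$: $p(x,x)\le p(x,y)$; $p(x,y)=p(y,x)$; $p(x,x)=p(x,y)=p(y,y)$ iff $x=y$; $p(x,y)\le p(x,z)+p(z,y)-p(z,z)$. A strong partial metric on $Y$ is $s:Y\times Y\to\mathbb{R}$ with $s(u,u)<s(u,v)$ for $u\neq v$, $s(u,v)=s(v,u)$, and $s(u,v)\le s(u,w)+s(w,v)-s(w,w)$. For such $q\in\{p,s\}$ the topology is generated by the balls $\{y\mid q(x,y)-q(x,x)<\epsilon\}$, so $a$ is a limit of $\{x_i\}$ iff for every $\epsilon>0$ there is $N$ with $q(a,x_i)-q(a,a)<\epsilon$ for all $i>N$. $\{x_i\}$ is Cauchy with central distance $r$ if for every $\epsilon>0$ there is $N$ with $|p(x_i,x_j)-r|<\epsilon$ for $i\ge j>N$; a special limit is a limit $a$ with $p(a,a)=r$; $(X,p)$ is complete if every Cauchy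 sequence has a special limit. A map $f:X\to Y$ is sequentially continuous if whenever $a$ is a limit of $\{x_i\}$, $f(a)$ is a limit of $\{f(x_i)\}$. $g$ is consistent if for all $x,z\in X$, $p(x,x)\le p(z,z)$ implies $s(g(x),g(x))\le s(g(z),g(z))$. *)

theory Defs
  imports Main "HOL.Real"
begin

definition partial_metric_on :: "'a set \<Rightarrow> ('a \<Rightarrow> 'a \<Rightarrow> real) \<Rightarrow> bool" where
  "partial_metric_on X p \<longleftrightarrow>
     (\<forall>x\<in>X. \<forall>y\<in>X. p x x \<le> p x y) \<and>
     (\<forall>x\<in>X. \<forall>y\<in>X. p x y = p y x) \<and>
     (\<forall>x\<in>X. \<forall>y\<in>X. (p x x = p x y \<and> p x y = p y y) \<longleftrightarrow> x = y) \<and>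
     (\<forall>x\<in>X. \<forall>y\<in>X. \<forall>z\<in>X. p x y \<le> p x z + p z y - p z z)"

definition strong_partial_metric_on :: "'b set \<Rightarrow> ('b \<Rightarrow> 'b \<Rightarrow> real) \<Rightarrow> bool" where
  "strong_partial_metric_on Y s \<longleftrightarrow>
     (\<forall>u\<in>Y. \<forall>v\<in>Y. u \<noteq> v \<longrightarrow> s u u < s u v) \<and>
     (\<forall>u\<in>Y. \<forall>v\<in>Y. s u v = s v u) \<and>
     (\<forall>u\<in>Y. \<forall>v\<in>Y. \<forall>w\<in>Y. s u v \<le> s u w + s w v - s w w)"

definition pm_limit :: "('a \<Rightarrow> 'a \<Rightarrow> real) \<Rightarrow> (nat \<Rightarrow> 'a) \<Rightarrow> 'a \<Rightarrow> bool" where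
  "pm_limit q xs a \<longleftrightarrow>
     (\<forall>\<epsilon>>0. \<exists>N. \<forall>i>N. q a (xs i) - q a a < \<epsilon>)"

definition pm_cauchy :: "('a \<Rightarrow> 'a \<Rightarrow> real) \<Rightarrow> (nat \<Rightarrow> 'a) \<Rightarrow> real \<Rightarrow> bool" where
  "pm_cauchy p xs r \<longleftrightarrow>
     (\<forall>\<epsilon>>0. \<exists>N. \<forall>i j. i \<ge> j \<and> j > N \<longrightarrow> \<bar>p (xs i) (xs j) - r\<bar> < \<epsilon>)"

definition pm_complete :: "'a set \<Rightarrow> ('a \<Rightarrow> 'a \<Rightarrow> real) \<Rightarrow> bool" where
  "pm_complete X p \<longleftrightarrow>
     (\<forall>xs r. (\<forall>i. xs i \<in> X) \<and> pm_cauchy p xs r \<longrightarrow>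
        (\<exists>a\<in>X. pm_limit p xs a \<and> p a a = r))"

definition seq_continuous ::
  "'a set \<Rightarrow> ('a \<Rightarrow> 'a \<Rightarrow> real) \<Rightarrow> ('b \<Rightarrow> 'b \<Rightarrow> real) \<Rightarrow> ('a \<Rightarrow> 'b) \<Rightarrow> bool" where
  "seq_continuous X p s f \<longleftrightarrow>
     (\<forall>xs a. (\<forall>i. xs i \<in> X) \<and> a \<in> X \<and> pm_limit p xs a \<longrightarrow>
        pm_limit s (\<lambda>i. f (xs i)) (f a))"

definition consistent ::
  "'a set \<Rightarrow> ('a \<Rightarrow> 'a \<Rightarrow> real) \<Rightarrow> ('b \<Rightarrow> 'b \<Rightarrow> real) \<Rightarrow> ('a \<Rightarrow> 'b) \<Rightarrow> bool" where
  "consistent X p s g \<longleftrightarrow>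
     (\<forall>x\<in>X. \<forall>z\<in>X. p x x \<le> p z z \<longrightarrow> s (g x) (g x) \<le> s (g z) (g z))"

end

theory Submission
  imports Defs Complex_Main
begin

text \<open>
  Starting anywhere, iterate the contraction hypothesis. The defect
  \<open>D x = s (f x) (g x) - s (f x) (f x)\<close> then decays geometrically, and the steps
  \<open>p x\<^sub>n x\<^sub>n\<^sub>+\<^sub>1\<close> exceed \<open>r\<close> by a geometric amount only, so the partial-metric
  triangle inequality makes the orbit Cauchy with central distance \<open>r\<close>. Its special
  limit \<open>a\<close> has self-distance \<open>r\<close>, below every \<open>p x\<^sub>n x\<^sub>n\<close>; consistency of \<open>g\<close>
  therefore bounds \<open>s (g a) (g a)\<close> by \<open>s (g x\<^sub>n) (g x\<^sub>n)\<close>, and passing to the limit in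
  two triangle inequalities yields \<open>s (f a) (g a) \<le> s (f a) (f a)\<close>, which in a
  strong partial metric space forces \<open>f a = g a\<close>.
\<close>

lemma eventually_mult_power_less:
  fixes K c e :: real
  assumes "0 \<le> c" "c < 1" "e > 0"
  shows "\<forall>\<^sub>F n in sequentially. K * c ^ n < e"
proof -
  have "(\<lambda>n. K * c ^ n) \<longlonglongrightarrow> 0"
    using assms by (intro tendsto_mult_right_zero LIMSEQ_power_zero) simp
  then show ?thesis
    using assms(3) by (rule order_tendstoD(2))
qed

lemma power_decay_bound:
  fixes a :: "nat \<Rightarrow> real"
  assumes "0 \<le> c" "\<And>n. a (Suc n) \<le> c * a n"
  shows "a n \<le> c ^ n * a 0"
proof (induction n)
  case (Suc n)
  have "a (Suc n) \<le> c * a n" by (rule assms(2))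
  also have "\<dots> \<le> c * (c ^ n * a 0)" using Suc assms(1) by (rule mult_left_mono)
  finally show ?case by simp
qed simp

lemma eventually_less_of_power_decay:
  fixes a :: "nat \<Rightarrow> real"
  assumes "0 \<le> c" "c < 1" "\<And>n. a (Suc n) \<le> c * a n" "\<epsilon> > 0"
  shows "\<forall>\<^sub>F n in sequentially. a n < \<epsilon>"
proof (rule eventually_mono)
  show "\<forall>\<^sub>F n in sequentially. a 0 * c ^ n < \<epsilon>"
    using assms(1,2,4) by (rule eventually_mult_power_less)
  show "a n < \<epsilon>" if "a 0 * c ^ n < \<epsilon>" for n
    using power_decay_bound[of c a n] assms(1,3) that by (simp add: mult.commute)
qed

lemma geometric_partial_sum_le:
  fixes c :: real
  assumes "0 \<le> c" "c < 1"
  shows "(\<Sum>m<k. c ^ (n + m)) \<le> c ^ n / (1 - c)"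
proof -
  have "(\<Sum>m<k. c ^ (n + m)) = c ^ n * (\<Sum>m<k. c ^ m)"
    by (simp add: power_add sum_distrib_left)
  also have "\<dots> = c ^ n * ((1 - c ^ k) / (1 - c))"
    using sum_gp_strict[of c k] assms(2) by simp
  also have "\<dots> \<le> c ^ n * (1 / (1 - c))"
    using assms by (intro mult_left_mono divide_right_mono) auto
  finally show ?thesis by simp
qed

lemma pm_limit_eventually:
  assumes "pm_limit q xs a" "\<epsilon> > 0"
  shows "\<forall>\<^sub>F i in sequentially. q a (xs i) - q a a < \<epsilon>"
proof -
  obtain N where "\<forall>i>N. q a (xs i) - q a a < \<epsilon>"
    using assms unfolding pm_limit_def by blast
  then have "\<forall>i\<ge>Suc N. q a (xs i) - q a a < \<epsilon>" by (simp add: Suc_le_eq)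
  then show ?thesis
    unfolding eventually_sequentially by blast
qed

lemma strong_partial_metric_eqI:
  assumes "strong_partial_metric_on Y s" "u \<in> Y" "v \<in> Y" "s u v \<le> s u u"
  shows "u = v"
proof (rule ccontr)
  assume "u \<noteq> v"
  then have "s u u < s u v"
    using assms(1-3) unfolding strong_partial_metric_on_def by blast
  with assms(4) show False by simp
qed

lemma strong_partial_metric_self_le:
  assumes "strong_partial_metric_on Y s" "u \<in> Y" "v \<in> Y"
  shows "s u u \<le> s u v"
proof (cases "u = v")
  case False
  then show ?thesis using strong_partial_metric_eqI[OF assms] by force
qed simp

text \<open>
  Telescoping with the triangle inequality: the self-distance \<open>p x\<^sub>m x\<^sub>m \<ge> r\<close> subtracted at
  each intermediate point absorbs the \<open>r\<close> contributed by the next step.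
\<close>

lemma partial_metric_orbit_bound:
  assumes pm: "partial_metric_on X p" and X: "\<And>n. xs n \<in> X"
    and self_ge: "\<And>n. r \<le> p (xs (Suc n)) (xs (Suc n))"
    and self_le: "\<And>n. p (xs (Suc n)) (xs (Suc n)) \<le> p (xs n) (xs (Suc n))"
    and step: "\<And>n. p (xs n) (xs (Suc n)) \<le> r + B * c ^ n"
  shows "p (xs (Suc n)) (xs (Suc n + k)) \<le> r + B * (\<Sum>m<Suc k. c ^ (n + m))"
proof (induction k)
  case 0
  show ?case using self_le[of n] step[of n] by simp
next
  case (Suc k)
  let ?m = "Suc n + k"
  have "p (xs (Suc n)) (xs (Suc ?m))
      \<le> p (xs (Suc n)) (xs ?m) + p (xs ?m) (xs (Suc ?m)) - p (xs ?m) (xs ?m)"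
    using pm X unfolding partial_metric_on_def by blast
  moreover have "r \<le> p (xs ?m) (xs ?m)" using self_ge[of "n + k"] by simp
  moreover have "p (xs ?m) (xs (Suc ?m)) \<le> r + B * c ^ (n + Suc k)" using step[of ?m] by simp
  ultimately show ?case using Suc by (simp add: algebra_simps)
qed

lemma partial_metric_orbit_cauchy:
  fixes c B :: real
  assumes pm: "partial_metric_on X p" and X: "\<And>n. xs n \<in> X"
    and self_ge: "\<And>n. r \<le> p (xs (Suc n)) (xs (Suc n))"
    and self_le: "\<And>n. p (xs (Suc n)) (xs (Suc n)) \<le> p (xs n) (xs (Suc n))"
    and step: "\<And>n. p (xs n) (xs (Suc n)) \<le> r + B * c ^ n"
    and "0 \<le> B" "0 \<le> c" "c < 1"
  shows "pm_cauchy p xs r"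
proof -
  have close: "\<bar>p (xs i) (xs (Suc n)) - r\<bar> \<le> B / (1 - c) * c ^ n" if "Suc n \<le> i" for i n
  proof -
    obtain k where i: "i = Suc n + k" using \<open>Suc n \<le> i\<close> le_Suc_ex by blast
    have "r \<le> p (xs i) (xs i)" using self_ge[of "n + k"] i by simp
    also have "\<dots> \<le> p (xs i) (xs (Suc n))" using pm X unfolding partial_metric_on_def by blast
    finally have lower: "r \<le> p (xs i) (xs (Suc n))" .
    have "p (xs i) (xs (Suc n)) = p (xs (Suc n)) (xs i)"
      using pm X unfolding partial_metric_on_def by blast
    also have "\<dots> \<le> r + B * (\<Sum>m<Suc k. c ^ (n + m))"
      unfolding i by (rule partial_metric_orbit_bound[OF pm X self_ge self_le step])
    also have "\<dots> \<le> r + B * (c ^ n / (1 - c))"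
      using mult_left_mono[OF geometric_partial_sum_le[OF assms(7,8)] assms(6)]
      by (simp del: sum.lessThan_Suc)
    finally show ?thesis using lower by simp
  qed
  show ?thesis
    unfolding pm_cauchy_def
  proof (intro allI impI)
    fix \<epsilon> :: real assume "\<epsilon> > 0"
    then obtain N where N: "\<And>n. n \<ge> N \<Longrightarrow> B / (1 - c) * c ^ n < \<epsilon>"
      using eventually_mult_power_less[OF assms(7,8)] unfolding eventually_sequentially by blast
    have "\<bar>p (xs i) (xs j) - r\<bar> < \<epsilon>" if "j \<le> i" "N < j" for i j
    proof -
      obtain n where "j = Suc n" "N \<le> n" using \<open>N < j\<close> by (cases j) auto
      then show ?thesis using close[of n i] N[of n] \<open>j \<le> i\<close> by (meson le_less_trans)
    qed
    then show "\<exists>N. \<forall>i j. j \<le> i \<and> N < j \<longrightarrow> \<bar>p (xs i) (xs j) - r\<bar> < \<epsilon>" by blast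
  qed
qed

text \<open>
  In the two triangle inequalities through \<open>us i\<close> and \<open>vs i\<close>, the only term not tending
  to zero is \<open>s v v - s (vs i) (vs i)\<close>, which is eventually nonpositive by hypothesis.
\<close>

lemma strong_partial_metric_limits_eq:
  assumes sm: "strong_partial_metric_on Y s"
    and Y: "u \<in> Y" "v \<in> Y" "\<And>i. us i \<in> Y" "\<And>i. vs i \<in> Y"
    and lim_u: "pm_limit s us u" and lim_v: "pm_limit s vs v"
    and self_le: "\<forall>\<^sub>F i in sequentially. s v v \<le> s (vs i) (vs i)"
    and defect: "\<And>\<epsilon>. \<epsilon> > 0 \<Longrightarrow> \<forall>\<^sub>F i in sequentially. s (us i) (vs i) - s (us i) (us i) < \<epsilon>"
  shows "u = v"
proof (rule strong_partial_metric_eqI[OF sm Y(1,2)])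
  show "s u v \<le> s u u"
  proof (rule field_le_epsilon)
    fix \<epsilon> :: real assume "\<epsilon> > 0"
    then have "\<forall>\<^sub>F i in sequentially. s u (us i) - s u u < \<epsilon> / 3 \<and> s v (vs i) - s v v < \<epsilon> / 3
        \<and> s (us i) (vs i) - s (us i) (us i) < \<epsilon> / 3 \<and> s v v \<le> s (vs i) (vs i)"
      by (intro eventually_conj pm_limit_eventually[OF lim_u] pm_limit_eventually[OF lim_v]
          defect self_le) simp_all
    then obtain i where i: "s u (us i) - s u u < \<epsilon> / 3" "s v (vs i) - s v v < \<epsilon> / 3"
        "s (us i) (vs i) - s (us i) (us i) < \<epsilon> / 3" "s v v \<le> s (vs i) (vs i)"
      unfolding eventually_sequentially by blast
    have "s u v \<le> s u (us i) + s (us i) v - s (us i) (us i)"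
      and "s (us i) v \<le> s (us i) (vs i) + s (vs i) v - s (vs i) (vs i)"
      and "s (vs i) v = s v (vs i)"
      using sm Y unfolding strong_partial_metric_on_def by blast+
    then show "s u v \<le> s u u + \<epsilon>" using i by linarith
  qed
qed

lemma partial_metric_contraction_orbit:
  fixes D :: "'a \<Rightarrow> real"
  assumes "X \<noteq> {}" and pm: "partial_metric_on X p" and "pm_complete X p"
    and D_nonneg: "\<And>x. x \<in> X \<Longrightarrow> 0 \<le> D x" and "0 \<le> A" "0 \<le> c" "c < 1"
    and contr: "\<forall>x\<in>X. \<exists>z\<in>X. D z \<le> c * D x \<and> r \<le> p z z \<and> p z z \<le> p x z \<and> p x z \<le> r + A * D x"
  obtains xs a where "\<And>n. xs n \<in> X" "a \<in> X" "pm_limit p xs a"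
    "\<And>n. p a a \<le> p (xs (Suc n)) (xs (Suc n))"
    "\<And>\<epsilon>. \<epsilon> > 0 \<Longrightarrow> \<forall>\<^sub>F n in sequentially. D (xs n) < \<epsilon>"
proof -
  obtain xs where X: "\<And>n. xs n \<in> X"
    and orbit: "\<And>n. D (xs (Suc n)) \<le> c * D (xs n) \<and> r \<le> p (xs (Suc n)) (xs (Suc n)) \<and>
      p (xs (Suc n)) (xs (Suc n)) \<le> p (xs n) (xs (Suc n)) \<and> p (xs n) (xs (Suc n)) \<le> r + A * D (xs n)"
    using dependent_nat_choice[of "\<lambda>_ x. x \<in> X"
        "\<lambda>_ x z. D z \<le> c * D x \<and> r \<le> p z z \<and> p z z \<le> p x z \<and> p x z \<le> r + A * D x"]
      assms(1) contr by blast
  have D_decay: "D (xs n) \<le> c ^ n * D (xs 0)" for n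
    using power_decay_bound[of c "\<lambda>n. D (xs n)"] orbit assms(6) by simp
  have step: "p (xs n) (xs (Suc n)) \<le> r + A * D (xs 0) * c ^ n" for n
    using orbit[of n] mult_left_mono[OF D_decay[of n] assms(5)] by (simp add: mult_ac)
  have "pm_cauchy p xs r"
    using orbit step X assms(5-7) D_nonneg[OF X]
    by (intro partial_metric_orbit_cauchy[OF pm, of xs r "A * D (xs 0)" c]) auto
  then obtain a where a: "a \<in> X" "pm_limit p xs a" "p a a = r"
    using assms(3) X unfolding pm_complete_def by blast
  show ?thesis
  proof (rule that[OF X a(1,2)])
    show "p a a \<le> p (xs (Suc n)) (xs (Suc n))" for n
      using orbit[of n] a(3) by simp
    show "\<forall>\<^sub>F n in sequentially. D (xs n) < \<epsilon>" if "\<epsilon> > 0" for \<epsilon>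
      using assms(6,7) orbit that by (intro eventually_less_of_power_decay[of c]) auto
  qed
qed

theorem theorem7p19:
  fixes X :: "'a set" and p :: "'a \<Rightarrow> 'a \<Rightarrow> real"
    and Y :: "'b set" and s :: "'b \<Rightarrow> 'b \<Rightarrow> real"
    and f g :: "'a \<Rightarrow> 'b" and r A c :: real
  assumes "X \<noteq> {}" and "partial_metric_on X p" and "pm_complete X p"
    and "strong_partial_metric_on Y s"
    and "f ` X \<subseteq> Y" and "g ` X \<subseteq> Y"
    and "seq_continuous X p s f" and "seq_continuous X p s g"
    and "consistent X p s g"
    and "A \<ge> 0" and "0 < c" and "c < 1"
    and "\<forall>x\<in>X. \<exists>z\<in>X.
           s (f z) (g z) - s (f z) (f z) \<le> c * (s (f x) (g x) - s (f x) (f x)) \<and>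
           r \<le> p z z \<and> p z z \<le> p x z \<and>
           p x z \<le> r + A * (s (f x) (g x) - s (f x) (f x))"
  shows "\<exists>a\<in>X. f a = g a"
proof -
  define D where "D x = s (f x) (g x) - s (f x) (f x)" for x
  have D_nonneg: "0 \<le> D x" if "x \<in> X" for x
    using strong_partial_metric_self_le[OF assms(4)] that assms(5,6)
    by (simp add: D_def image_subset_iff)
  have contr: "\<forall>x\<in>X. \<exists>z\<in>X. D z \<le> c * D x \<and> r \<le> p z z \<and> p z z \<le> p x z \<and> p x z \<le> r + A * D x"
    using assms(13) unfolding D_def .
  obtain xs a where X: "\<And>n. xs n \<in> X" and a: "a \<in> X" "pm_limit p xs a"
    and self_le: "\<And>n. p a a \<le> p (xs (Suc n)) (xs (Suc n))"
    and defect: "\<And>\<epsilon>. \<epsilon> > 0 \<Longrightarrow> \<forall>\<^sub>F n in sequentially. D (xs n) < \<epsilon>"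
    using partial_metric_contraction_orbit[OF assms(1-3) D_nonneg assms(10)
        less_imp_le[OF assms(11)] assms(12) contr] by metis
  have "s (g a) (g a) \<le> s (g (xs (Suc n))) (g (xs (Suc n)))" for n
    using assms(9) self_le a(1) X unfolding consistent_def by blast
  then have g_self_le: "\<forall>\<^sub>F i in sequentially. s (g a) (g a) \<le> s (g (xs i)) (g (xs i))"
    by (subst eventually_sequentially_Suc[symmetric]) (rule always_eventually, simp)
  have Y: "f a \<in> Y" "g a \<in> Y" "f (xs i) \<in> Y" "g (xs i) \<in> Y" for i
    using assms(5,6) a(1) X by auto
  have "pm_limit s (\<lambda>i. f (xs i)) (f a)" "pm_limit s (\<lambda>i. g (xs i)) (g a)"
    using assms(7,8) a X unfolding seq_continuous_def by simp_all
  then have "f a = g a"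
    using defect unfolding D_def by (rule strong_partial_metric_limits_eq[OF assms(4) Y _ _ g_self_le])
  then show ?thesis using a by blast
qed

end
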